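(* In the MHAV setting described in the context, suppose there is $b>0$ such that for all $\lambda\in\Lambda$ and all $y,y'\in Y$ with $\phi_Y(y,y')>0$, $$\frac{\bar\Pi(\lambda,y')\,\phi_Y(y',y)}{\bar\Pi(\lambda,y)\,\phi_Y(y,y')}>b.$$ Then the Markov kernel $\bar P_{\mathrm{MH}}$ on $\Lambda\times Y$ is irreducible and aperiodic.
   Context: MHAV setting: $Y$ is a finite nonempty set, $f:Y\to\mathbb{R}$; $\Lambda=\{\lambda_1<\lambda_2<\dots<\lambda_n\}$ is a finite set of positive reals with $n\ge2$; $\bar\Pi(\lambda,y)=\lambda^{-f(y)}/Z$ on $\Lambda\times Y$ with $Z=\sum_{\lambda,y}\lambda^{-f(y)}$. $\phi_Y$ is an irreducible Markov kernel on $Y$. For $\alpha'\in(0,1)$, $\phi_\Lambda$ is the kernel on $\Lambda$ with $\phi_\Lambda(\lambda_1,\lambda_2)=1$, $\phi_\Lambda(\lambda_n,\lambda_{n-1})=1$, and for $1<i<n$, $\phi_\Lambda(\lambda_i,\lambda_{i+1})=\alpha'$, $\phi_\Lambda(\lambda_i,\lambda_{i-1})=1-\alpha'$, all other entries $0$. For $\alpha,\beta\in(0,1)$ with $\alpha+\beta<1$, the proposal $\bar\phi$ on $\Lambda\times Y$ is $\bar\phi[(\lambda,y),(\lambda',y')]=\alpha\phi_\Lambda(\lambda,\lambda')$ if $\lambda\ne\lambda',y=y'$; $=\beta\phi_Y(y,y')$ if $\lambda=\lambda',y\ne y'$; $=(1-\alpha-\beta)+\beta\phi_Y(y,y)$ if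 $\lambda=\lambda',y=y'$; and $=0$ if $\lambda\ne\lambda',y\ne y'$. The acceptance probability is $\bar{\mathsf{Acc}}(x,x')=\min\{1,\frac{\bar\phi(x',x)\bar\Pi(x')}{\bar\phi(x,x')\bar\Pi(x)}\}$ and $\bar P_{\mathrm{MH}}(x,x')=\bar\phi(x,x')\bar{\mathsf{Acc}}(x,x')$ for $x\ne x'$, $\bar P_{\mathrm{MH}}(x,x)=1-\sum_{x'\ne x}\bar\phi(x,x')\bar{\mathsf{Acc}}(x,x')$. *)

theory Defs
  imports "HOL-Analysis.Analysis"
begin

definition markov_kernel_on :: "'a set \<Rightarrow> ('a \<Rightarrow> 'a \<Rightarrow> real) \<Rightarrow> bool" where
  "markov_kernel_on S K \<longleftrightarrow>
     (\<forall>x\<in>S. \<forall>y\<in>S. K x y \<ge> 0) \<and> (\<forall>x\<in>S. (\<Sum>y\<in>S. K x y) = 1)"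

fun kpow :: "'a set \<Rightarrow> ('a \<Rightarrow> 'a \<Rightarrow> real) \<Rightarrow> nat \<Rightarrow> 'a \<Rightarrow> 'a \<Rightarrow> real" where
  "kpow S K 0 x z = (if x = z then 1 else 0)"
| "kpow S K (Suc m) x z = (\<Sum>y\<in>S. K x y * kpow S K m y z)"

definition irreducible_on :: "'a set \<Rightarrow> ('a \<Rightarrow> 'a \<Rightarrow> real) \<Rightarrow> bool" where
  "irreducible_on S K \<longleftrightarrow> (\<forall>x\<in>S. \<forall>y\<in>S. \<exists>m. kpow S K m x y > 0)"

definition period :: "'a set \<Rightarrow> ('a \<Rightarrow> 'a \<Rightarrow> real) \<Rightarrow> 'a \<Rightarrow> nat" where
  "period S K x = Gcd {m. m \<ge> 1 \<and> kpow S K m x x > 0}"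

definition aperiodic_on :: "'a set \<Rightarrow> ('a \<Rightarrow> 'a \<Rightarrow> real) \<Rightarrow> bool" where
  "aperiodic_on S K \<longleftrightarrow> (\<forall>x\<in>S. period S K x = 1)"

text \<open>The MHAV construction. Lambda = {lam 1 < ... < lam n}.\<close>

definition Zc :: "real set \<Rightarrow> 'y set \<Rightarrow> ('y \<Rightarrow> real) \<Rightarrow> real" where
  "Zc Lam Y f = (\<Sum>(l, y)\<in>Lam \<times> Y. l powr (- f y))"

definition PiBar :: "real set \<Rightarrow> 'y set \<Rightarrow> ('y \<Rightarrow> real) \<Rightarrow> real \<times> 'y \<Rightarrow> real" where
  "PiBar Lam Y f = (\<lambda>(l, y). l powr (- f y) / Zc Lam Y f)"

definition phiLam :: "(nat \<Rightarrow> real) \<Rightarrow> nat \<Rightarrow> real \<Rightarrow> real \<Rightarrow> real \<Rightarrow> real" where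
  "phiLam lam n \<alpha>' a a' =
     (if a = lam 1 \<and> a' = lam 2 then 1
      else if a = lam n \<and> a' = lam (n - 1) then 1
      else if (\<exists>i. 1 < i \<and> i < n \<and> a = lam i \<and> a' = lam (i + 1)) then \<alpha>'
      else if (\<exists>i. 1 < i \<and> i < n \<and> a = lam i \<and> a' = lam (i - 1)) then 1 - \<alpha>'
      else 0)"

definition phiBar :: "(real \<Rightarrow> real \<Rightarrow> real) \<Rightarrow> ('y \<Rightarrow> 'y \<Rightarrow> real) \<Rightarrow> real \<Rightarrow> real
                       \<Rightarrow> real \<times> 'y \<Rightarrow> real \<times> 'y \<Rightarrow> real" where
  "phiBar phiL phiY \<alpha> \<beta> = (\<lambda>(l, y) (l', y').
     if l \<noteq> l' \<and> y = y' then \<alpha> * phiL l l'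
     else if l = l' \<and> y \<noteq> y' then \<beta> * phiY y y'
     else if l = l' \<and> y = y' then (1 - \<alpha> - \<beta>) + \<beta> * phiY y y
     else 0)"

definition Acc :: "('s \<Rightarrow> 's \<Rightarrow> real) \<Rightarrow> ('s \<Rightarrow> real) \<Rightarrow> 's \<Rightarrow> 's \<Rightarrow> real" where
  "Acc phi P x x' = min 1 ((phi x' x * P x') / (phi x x' * P x))"

definition PMH :: "'s set \<Rightarrow> ('s \<Rightarrow> 's \<Rightarrow> real) \<Rightarrow> ('s \<Rightarrow> real) \<Rightarrow> 's \<Rightarrow> 's \<Rightarrow> real" where
  "PMH S phi P x x' =
     (if x \<noteq> x' then phi x x' * Acc phi P x x'
      else 1 - (\<Sum>z\<in>S - {x}. phi x z * Acc phi P x z))"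

end

theory Submission
  imports Defs
begin

text \<open>Every state has positive holding probability: the proposal stays put with probability at
  least 1 - \<alpha> - \<beta>, and acceptance probabilities never exceed 1; hence the chain is aperiodic.
  For irreducibility, the ratio bound forces the support of phiY to be symmetric, so every move
  proposed by phiY inside a fibre {\<lambda>} \<times> Y, and every move between neighbouring temperatures, is
  accepted with positive probability. Irreducibility of phiY and the path \<lambda>1, ..., \<lambda>n then
  connect any two states in the transition graph, and paths in that graph are exactly what
  positive multi-step transition probabilities amount to.\<close>

definition kernel_graph :: "'a set \<Rightarrow> ('a \<Rightarrow> 'a \<Rightarrow> real) \<Rightarrow> ('a \<times> 'a) set" where
  "kernel_graph S K = {(x, z). x \<in> S \<and> z \<in> S \<and> K x z > 0}"

lemma kpow_nonneg:
  assumes "\<forall>x\<in>S. \<forall>z\<in>S. K x z \<ge> 0" and "x \<in> S"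
  shows "kpow S K m x z \<ge> 0"
  using assms(2)
proof (induction m arbitrary: x)
  case (Suc m)
  then show ?case using assms(1) by (auto intro!: sum_nonneg)
qed simp

lemma kpow_Suc_ge:
  assumes "finite S" and "\<forall>x\<in>S. \<forall>z\<in>S. K x z \<ge> 0" and "x \<in> S" and "y \<in> S"
  shows "K x y * kpow S K m y z \<le> kpow S K (Suc m) x z"
  unfolding kpow.simps
  by (rule member_le_sum) (use assms kpow_nonneg[OF assms(2)] in auto)

lemma kpow_pos_if_reachable:
  assumes "finite S" and "\<forall>x\<in>S. \<forall>z\<in>S. K x z \<ge> 0" and "(x, z) \<in> (kernel_graph S K)\<^sup>*"
  shows "\<exists>m. kpow S K m x z > 0"
  using assms(3)
proof (induction rule: converse_rtrancl_induct)
  case base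
  show ?case by (intro exI[of _ 0]) simp
next
  case (step u v)
  then obtain m where m: "kpow S K m v z > 0" by blast
  from step(1) have uv: "u \<in> S" "v \<in> S" "K u v > 0" by (auto simp: kernel_graph_def)
  have "0 < K u v * kpow S K m v z" using uv m by simp
  also have "\<dots> \<le> kpow S K (Suc m) u z" by (rule kpow_Suc_ge[OF assms(1,2) uv(1,2)])
  finally show ?case by blast
qed

lemma reachable_if_kpow_pos:
  assumes "\<forall>x\<in>S. \<forall>z\<in>S. K x z \<ge> 0" and "x \<in> S" and "kpow S K m x z > 0"
  shows "(x, z) \<in> (kernel_graph S K)\<^sup>*"
  using assms(2,3)
proof (induction m arbitrary: x)
  case 0
  then show ?case by (simp split: if_splits)
next
  case (Suc m)
  have "\<exists>w\<in>S. 0 < K x w * kpow S K m w z"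
  proof (rule ccontr)
    assume "\<not> ?thesis"
    then have "(\<Sum>w\<in>S. K x w * kpow S K m w z) \<le> 0" by (intro sum_nonpos) (auto simp: not_less)
    with Suc.prems(2) show False by simp
  qed
  then obtain w where w: "w \<in> S" "0 < K x w * kpow S K m w z" by blast
  moreover have "K x w \<ge> 0" using assms(1) w(1) Suc.prems(1) by simp
  ultimately have "K x w > 0" "kpow S K m w z > 0"
    using kpow_nonneg[OF assms(1) w(1)] by (auto simp: zero_less_mult_iff)
  then show ?case
    using Suc.IH[OF w(1)] Suc.prems(1) w(1)
    by (auto simp: kernel_graph_def intro: converse_rtrancl_into_rtrancl)
qed

lemma irreducible_on_iff_reachable:
  assumes "finite S" and "\<forall>x\<in>S. \<forall>z\<in>S. K x z \<ge> 0"
  shows "irreducible_on S K \<longleftrightarrow> (\<forall>x\<in>S. \<forall>z\<in>S. (x, z) \<in> (kernel_graph S K)\<^sup>*)"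
  unfolding irreducible_on_def
  using kpow_pos_if_reachable[OF assms] reachable_if_kpow_pos[OF assms(2)] by meson

lemma aperiodic_on_if_diag_pos:
  assumes "finite S" and "\<forall>x\<in>S. K x x > 0"
  shows "aperiodic_on S K"
  unfolding aperiodic_on_def period_def
proof
  fix x assume "x \<in> S"
  then have "kpow S K 1 x x = K x x"
    using assms(1) by (simp add: if_distrib sum.delta' cong: if_cong)
  with assms(2) \<open>x \<in> S\<close> have "1 \<in> {m. m \<ge> 1 \<and> kpow S K m x x > 0}" by simp
  then show "Gcd {m. m \<ge> 1 \<and> kpow S K m x x > 0} = 1"
    using Gcd_dvd by (metis nat_dvd_1_iff_1)
qed

lemma rtrancl_ladder:
  assumes "\<And>k. m \<le> k \<Longrightarrow> k < j \<Longrightarrow> (g k, g (Suc k)) \<in> R" and "m \<le> i" and "i \<le> j"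
  shows "(g i, g j) \<in> R\<^sup>*"
  using assms(3) by (induction rule: dec_induct) (use assms(1,2) in \<open>auto intro: rtrancl_into_rtrancl\<close>)

lemma rtrancl_ladder_connected:
  assumes "\<And>k. 1 \<le> k \<Longrightarrow> k < n \<Longrightarrow> (g k, g (Suc k)) \<in> R \<and> (g (Suc k), g k) \<in> R"
    and "i \<in> {1..n}" and "j \<in> {1..n}"
  shows "(g i, g j) \<in> R\<^sup>*"
proof (cases "i \<le> j")
  case True
  then show ?thesis using assms by (intro rtrancl_ladder[of 1 j g R]) auto
next
  case False
  then have "(g j, g i) \<in> (R\<inverse>)\<^sup>*" using assms by (intro rtrancl_ladder[of 1 i g "R\<inverse>"]) auto
  then show ?thesis by (rule rtrancl_converseD)
qed

lemma rtrancl_map: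
  assumes "(x, z) \<in> E\<^sup>*" and "\<And>a c. (a, c) \<in> E \<Longrightarrow> (h a, h c) \<in> R\<^sup>*"
  shows "(h x, h z) \<in> R\<^sup>*"
  using assms(1) by induction (use assms(2) in \<open>auto intro: rtrancl_trans\<close>)

lemma Acc_le_one: "Acc phi P x z \<le> 1"
  by (simp add: Acc_def)

lemma Acc_nonneg:
  assumes "phi x z \<ge> 0" and "phi z x \<ge> 0" and "P x \<ge> 0" and "P z \<ge> 0"
  shows "Acc phi P x z \<ge> 0"
  using assms unfolding Acc_def by (simp add: divide_nonneg_nonneg)

lemma Acc_pos:
  assumes "phi x z > 0" and "phi z x > 0" and "P x > 0" and "P z > 0"
  shows "Acc phi P x z > 0"
  using assms unfolding Acc_def by simp

lemma PMH_offdiag_pos: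
  assumes "x \<noteq> z" and "phi x z > 0" and "phi z x > 0" and "P x > 0" and "P z > 0"
  shows "PMH S phi P x z > 0"
  using assms Acc_pos[OF assms(2-5)] by (simp add: PMH_def)

lemma PMH_diag_ge:
  assumes "\<forall>z\<in>S. phi x z \<ge> 0"
  shows "1 - (\<Sum>z\<in>S - {x}. phi x z) \<le> PMH S phi P x x"
proof -
  have "(\<Sum>z\<in>S - {x}. phi x z * Acc phi P x z) \<le> (\<Sum>z\<in>S - {x}. phi x z)"
    by (rule sum_mono, rule mult_left_le) (use assms Acc_le_one in auto)
  then show ?thesis by (simp add: PMH_def)
qed

lemma PMH_diag_pos:
  assumes "\<forall>z\<in>S. phi x z \<ge> 0" and "(\<Sum>z\<in>S - {x}. phi x z) < 1"
  shows "PMH S phi P x x > 0"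
  using PMH_diag_ge[of S phi x P, OF assms(1)] assms(2) by linarith

lemma PMH_nonneg:
  assumes "\<forall>x\<in>S. \<forall>z\<in>S. phi x z \<ge> 0" and "\<forall>x\<in>S. P x \<ge> 0"
    and "\<forall>x\<in>S. (\<Sum>z\<in>S - {x}. phi x z) \<le> 1"
  shows "\<forall>x\<in>S. \<forall>z\<in>S. PMH S phi P x z \<ge> 0"
proof (intro ballI)
  fix x z assume "x \<in> S" "z \<in> S"
  show "PMH S phi P x z \<ge> 0"
  proof (cases "x = z")
    case True
    then show ?thesis using PMH_diag_ge[of S phi x P] assms(1,3) \<open>x \<in> S\<close> by fastforce
  next
    case False
    then show ?thesis
      using assms(1,2) \<open>x \<in> S\<close> \<open>z \<in> S\<close> Acc_nonneg[of phi x z P] by (simp add: PMH_def)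
  qed
qed

lemma reverse_pos_if_ratio_gt:
  fixes P :: "'a \<Rightarrow> real" and Q :: "'a \<Rightarrow> 'a \<Rightarrow> real"
  assumes "(P y' * Q y' y) / (P y * Q y y') > b" and "b > 0"
    and "P y > 0" and "P y' > 0" and "Q y y' > 0"
  shows "Q y' y > 0"
proof -
  have "(P y' * Q y' y) / (P y * Q y y') > 0" using assms(1,2) by linarith
  moreover have "P y * Q y y' > 0" using assms(3,5) by simp
  ultimately have "P y' * Q y' y > 0" by (auto simp: zero_less_divide_iff)
  with assms(4) show ?thesis by (simp add: zero_less_mult_iff)
qed

lemma PiBar_pos:
  assumes "finite Lam" and "finite Y" and "\<forall>l\<in>Lam. l > 0" and "x \<in> Lam \<times> Y"
  shows "PiBar Lam Y f x > 0"
proof -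
  have "Zc Lam Y f > 0"
    unfolding Zc_def using assms by (intro sum_pos) auto
  then show ?thesis using assms(3,4) by (auto simp: PiBar_def)
qed

lemma phiBar_nonneg:
  assumes "\<forall>l\<in>Lam. \<forall>l'\<in>Lam. phiL l l' \<ge> 0" and "\<forall>y\<in>Y. \<forall>y'\<in>Y. phiY y y' \<ge> 0"
    and "0 \<le> \<alpha>" and "0 \<le> \<beta>" and "\<alpha> + \<beta> \<le> 1"
  shows "\<forall>x\<in>Lam \<times> Y. \<forall>z\<in>Lam \<times> Y. phiBar phiL phiY \<alpha> \<beta> x z \<ge> 0"
  using assms by (auto simp: phiBar_def)

lemma phiBar_offdiag_sum:
  assumes "finite Lam" and "finite Y" and "l \<in> Lam" and "y \<in> Y"
  shows "(\<Sum>z\<in>Lam \<times> Y - {(l, y)}. phiBar phiL phiY \<alpha> \<beta> (l, y) z)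
           = \<alpha> * (\<Sum>l'\<in>Lam - {l}. phiL l l') + \<beta> * (\<Sum>y'\<in>Y - {y}. phiY y y')"
proof -
  let ?q = "phiBar phiL phiY \<alpha> \<beta> (l, y)"
  define F where "F l' = (\<Sum>y'\<in>Y. if (l', y') = (l, y) then 0 else ?q (l', y'))" for l'
  have "(\<Sum>z\<in>Lam \<times> Y - {(l, y)}. ?q z) = (\<Sum>z\<in>Lam \<times> Y. if z = (l, y) then 0 else ?q z)"
    using assms by (simp add: sum.delta_remove)
  also have "\<dots> = (\<Sum>l'\<in>Lam. F l')"
    unfolding F_def sum.cartesian_product by (intro sum.cong) (auto split: if_splits)
  also have "\<dots> = F l + (\<Sum>l'\<in>Lam - {l}. F l')"
    using assms by (simp add: sum.remove)
  also have "F l = (\<Sum>y'\<in>Y - {y}. ?q (l, y'))"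
    using assms by (simp add: F_def sum.delta_remove)
  also have "\<dots> = \<beta> * (\<Sum>y'\<in>Y - {y}. phiY y y')"
    unfolding sum_distrib_left by (rule sum.cong) (auto simp: phiBar_def)
  also have "(\<Sum>l'\<in>Lam - {l}. F l') = (\<Sum>l'\<in>Lam - {l}. \<alpha> * phiL l l')"
  proof (rule sum.cong)
    fix l' assume "l' \<in> Lam - {l}"
    then have "F l' = (\<Sum>y'\<in>Y. if y' = y then \<alpha> * phiL l l' else 0)"
      unfolding F_def by (intro sum.cong) (auto simp: phiBar_def)
    then show "F l' = \<alpha> * phiL l l'" using assms by simp
  qed simp
  finally show ?thesis by (simp add: sum_distrib_left)
qed

lemma phiBar_offdiag_sum_le:
  assumes "finite Lam" and "finite Y" and "l \<in> Lam" and "y \<in> Y"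
    and "(\<Sum>l'\<in>Lam - {l}. phiL l l') \<le> 1" and "markov_kernel_on Y phiY"
    and "0 \<le> \<alpha>" and "0 \<le> \<beta>"
  shows "(\<Sum>z\<in>Lam \<times> Y - {(l, y)}. phiBar phiL phiY \<alpha> \<beta> (l, y) z) \<le> \<alpha> + \<beta>"
proof -
  have "(\<Sum>y'\<in>Y - {y}. phiY y y') = 1 - phiY y y"
    using assms(2,4,6) by (simp add: sum_diff1 markov_kernel_on_def)
  also have "\<dots> \<le> 1" using assms(4,6) by (simp add: markov_kernel_on_def)
  finally have "\<beta> * (\<Sum>y'\<in>Y - {y}. phiY y y') \<le> \<beta>" using assms(8) by (simp add: mult_left_le)
  moreover have "\<alpha> * (\<Sum>l'\<in>Lam - {l}. phiL l l') \<le> \<alpha>" using assms(5,7) by (simp add: mult_left_le)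
  ultimately show ?thesis by (simp add: phiBar_offdiag_sum[OF assms(1-4)])
qed

lemma phiLam_eq:
  assumes inj: "inj_on lam {1..n}" and n: "n \<ge> 2" and i: "i \<in> {1..n}" and j: "j \<in> {1..n}"
  shows "phiLam lam n a (lam i) (lam j) =
    (if i = 1 \<and> j = 2 then 1 else if i = n \<and> j = n - 1 then 1
     else if 1 < i \<and> i < n \<and> j = i + 1 then a
     else if 1 < i \<and> i < n \<and> j = i - 1 then 1 - a else 0)"
proof -
  have eq: "\<And>u v. u \<in> {1..n} \<Longrightarrow> v \<in> {1..n} \<Longrightarrow> lam u = lam v \<longleftrightarrow> u = v"
    using inj by (meson inj_on_eq_iff)
  have e1: "lam i = lam 1 \<longleftrightarrow> i = 1" using eq i n by simp
  have e2: "lam j = lam 2 \<longleftrightarrow> j = 2" using eq j n by simp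
  have e3: "lam i = lam n \<longleftrightarrow> i = n" using eq i n by simp
  have e4: "lam j = lam (n - 1) \<longleftrightarrow> j = n - 1" using eq j n by simp
  have e5: "(\<exists>k. 1 < k \<and> k < n \<and> lam i = lam k \<and> lam j = lam (k + 1))
      \<longleftrightarrow> 1 < i \<and> i < n \<and> j = i + 1"
  proof
    assume "\<exists>k. 1 < k \<and> k < n \<and> lam i = lam k \<and> lam j = lam (k + 1)"
    then obtain k where "1 < k" "k < n" "lam i = lam k" "lam j = lam (k + 1)" by blast
    then show "1 < i \<and> i < n \<and> j = i + 1" using eq[of i k] eq[of j "k + 1"] i j by auto
  qed auto
  have e6: "(\<exists>k. 1 < k \<and> k < n \<and> lam i = lam k \<and> lam j = lam (k - 1))
      \<longleftrightarrow> 1 < i \<and> i < n \<and> j = i - 1"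
  proof
    assume "\<exists>k. 1 < k \<and> k < n \<and> lam i = lam k \<and> lam j = lam (k - 1)"
    then obtain k where "1 < k" "k < n" "lam i = lam k" "lam j = lam (k - 1)" by blast
    moreover have "k - 1 \<in> {1..n}" using \<open>1 < k\<close> \<open>k < n\<close> by auto
    ultimately show "1 < i \<and> i < n \<and> j = i - 1" using eq[of i k] eq[of j "k - 1"] i j by auto
  qed auto
  show ?thesis unfolding phiLam_def e1 e2 e3 e4 e5 e6 by simp
qed

lemma phiLam_nonneg:
  assumes "0 \<le> a" and "a \<le> 1"
  shows "phiLam lam n a u v \<ge> 0"
  using assms by (simp add: phiLam_def)

lemma phiLam_offdiag_sum_le:
  assumes inj: "inj_on lam {1..n}" and n: "n \<ge> 2" and i: "i \<in> {1..n}" and a: "0 \<le> a" "a \<le> 1"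
  shows "(\<Sum>l'\<in>lam ` {1..n} - {lam i}. phiLam lam n a (lam i) l') \<le> 1"
proof -
  define up where "up = (if i = 1 then 1 else if i = n then 0 else a)"
  define down where "down = (if i = n then 1 else if i = 1 then 0 else 1 - a)"
  have "lam ` {1..n} - {lam i} = lam ` ({1..n} - {i})"
    using inj i by (auto simp: inj_on_eq_iff)
  moreover have "inj_on lam ({1..n} - {i})" using inj by (rule inj_on_subset) auto
  ultimately have "(\<Sum>l'\<in>lam ` {1..n} - {lam i}. phiLam lam n a (lam i) l')
      = (\<Sum>j\<in>{1..n} - {i}. phiLam lam n a (lam i) (lam j))"
    by (simp add: sum.reindex)
  also have "\<dots> \<le> (\<Sum>j\<in>{1..n} - {i}. (if j = i + 1 then up else 0) + (if j = i - 1 then down else 0))"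
    by (rule sum_mono) (use i n a in \<open>auto simp: phiLam_eq[OF inj n] up_def down_def\<close>)
  also have "\<dots> \<le> up + down"
    unfolding sum.distrib using a by (simp add: up_def down_def)
  also have "\<dots> \<le> 1" using a n by (auto simp: up_def down_def)
  finally show ?thesis .
qed

lemma phiLam_ladder_step:
  assumes inj: "inj_on lam {1..n}" and n: "n \<ge> 2" and a: "0 < a" "a < 1"
    and k: "1 \<le> k" "k < n"
  shows "lam k \<noteq> lam (Suc k) \<and> phiLam lam n a (lam k) (lam (Suc k)) > 0
           \<and> phiLam lam n a (lam (Suc k)) (lam k) > 0"
proof -
  have "k \<in> {1..n}" "Suc k \<in> {1..n}" using k by auto
  then show ?thesis using k a inj by (auto simp: phiLam_eq[OF inj n] inj_on_eq_iff)
qed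

lemma phiBar_phiLam_offdiag_sum_le:
  assumes "finite Y" and inj: "inj_on lam {1..n}" and n: "n \<ge> 2" and "markov_kernel_on Y phiY"
    and "0 \<le> a" "a \<le> 1" "0 \<le> \<alpha>" "0 \<le> \<beta>" and x: "x \<in> lam ` {1..n} \<times> Y"
  shows "(\<Sum>z\<in>lam ` {1..n} \<times> Y - {x}. phiBar (phiLam lam n a) phiY \<alpha> \<beta> x z) \<le> \<alpha> + \<beta>"
proof -
  obtain i y where "x = (lam i, y)" "i \<in> {1..n}" "y \<in> Y" using x by blast
  with phiLam_offdiag_sum_le[OF inj n, of i a] assms(1,4-8) show ?thesis
    by (auto intro!: phiBar_offdiag_sum_le)
qed

lemma irreducible_on_PMH_phiBar:
  fixes g :: "nat \<Rightarrow> real"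
  assumes fin: "finite Lam" "finite Y" and ladder: "Lam = g ` {1..n}"
    and steps: "\<And>k. 1 \<le> k \<Longrightarrow> k < n \<Longrightarrow>
                 g k \<noteq> g (Suc k) \<and> phiL (g k) (g (Suc k)) > 0 \<and> phiL (g (Suc k)) (g k) > 0"
    and phiY: "markov_kernel_on Y phiY" "irreducible_on Y phiY"
    and phiY_sym: "\<And>y y'. y \<in> Y \<Longrightarrow> y' \<in> Y \<Longrightarrow> phiY y y' > 0 \<Longrightarrow> phiY y' y > 0"
    and \<alpha>: "0 < \<alpha>" and \<beta>: "0 < \<beta>"
    and P_pos: "\<forall>x\<in>Lam \<times> Y. P x > 0"
    and K_nonneg: "\<forall>x\<in>Lam \<times> Y. \<forall>z\<in>Lam \<times> Y. PMH (Lam \<times> Y) (phiBar phiL phiY \<alpha> \<beta>) P x z \<ge> 0"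
  shows "irreducible_on (Lam \<times> Y) (PMH (Lam \<times> Y) (phiBar phiL phiY \<alpha> \<beta>) P)"
proof -
  let ?phi = "phiBar phiL phiY \<alpha> \<beta>"
  let ?R = "kernel_graph (Lam \<times> Y) (PMH (Lam \<times> Y) ?phi P)"
  have edge: "(x, z) \<in> ?R"
    if "x \<in> Lam \<times> Y" "z \<in> Lam \<times> Y" "x \<noteq> z" "?phi x z > 0" "?phi z x > 0" for x z
    using that P_pos by (auto simp: kernel_graph_def intro!: PMH_offdiag_pos)
  have phiY_nonneg: "\<forall>y\<in>Y. \<forall>y'\<in>Y. phiY y y' \<ge> 0"
    using phiY(1) by (simp add: markov_kernel_on_def)
  have fibre: "((l, y), (l, y')) \<in> ?R\<^sup>*" if "l \<in> Lam" "y \<in> Y" "y' \<in> Y" for l y y'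
  proof -
    have "(y, y') \<in> (kernel_graph Y phiY)\<^sup>*"
      using phiY(2) irreducible_on_iff_reachable[OF fin(2) phiY_nonneg] that(2,3) by blast
    then show ?thesis
    proof (rule rtrancl_map)
      fix u v assume "(u, v) \<in> kernel_graph Y phiY"
      then have "u \<in> Y" "v \<in> Y" "phiY u v > 0" "phiY v u > 0"
        using phiY_sym by (auto simp: kernel_graph_def)
      then show "((l, u), (l, v)) \<in> ?R\<^sup>*"
        using that(1) \<beta> edge[of "(l, u)" "(l, v)"] by (cases "u = v") (auto simp: phiBar_def)
    qed
  qed
  have level: "((g i, y), (g j, y)) \<in> ?R\<^sup>*" if "i \<in> {1..n}" "j \<in> {1..n}" "y \<in> Y" for i j y
  proof (rule rtrancl_ladder_connected[of n "\<lambda>k. (g k, y)"])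
    fix k assume "1 \<le> k" "k < n"
    with steps[of k] show "((g k, y), (g (Suc k), y)) \<in> ?R \<and> ((g (Suc k), y), (g k, y)) \<in> ?R"
      using that(3) \<alpha> edge ladder by (auto simp: phiBar_def)
  qed (use that in auto)
  show ?thesis
    unfolding irreducible_on_iff_reachable[OF finite_SigmaI[OF fin(1) fin(2)] K_nonneg]
  proof (intro ballI)
    fix x z assume "x \<in> Lam \<times> Y" "z \<in> Lam \<times> Y"
    then obtain i j y y' where "x = (g i, y)" "z = (g j, y')"
      and "i \<in> {1..n}" "j \<in> {1..n}" "y \<in> Y" "y' \<in> Y"
      using ladder by auto
    then show "(x, z) \<in> ?R\<^sup>*"
      using fibre level ladder by (meson image_eqI rtrancl_trans)
  qed
qed

theorem lemma14:
  fixes Y :: "'y set" and f :: "'y \<Rightarrow> real" and lam :: "nat \<Rightarrow> real" and n :: nat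
    and phiY :: "'y \<Rightarrow> 'y \<Rightarrow> real" and \<alpha> \<beta> \<alpha>' b :: real
  assumes "finite Y" and "Y \<noteq> {}"
    and "n \<ge> 2"
    and "strict_mono_on {1..n} lam" and "\<forall>i\<in>{1..n}. lam i > 0"
    and "markov_kernel_on Y phiY" and "irreducible_on Y phiY"
    and "0 < \<alpha>'" and "\<alpha>' < 1"
    and "0 < \<alpha>" and "\<alpha> < 1" and "0 < \<beta>" and "\<beta> < 1" and "\<alpha> + \<beta> < 1"
    and "b > 0"
    and "\<forall>l\<in>lam ` {1..n}. \<forall>y\<in>Y. \<forall>y'\<in>Y. phiY y y' > 0 \<longrightarrow>
           (PiBar (lam ` {1..n}) Y f (l, y') * phiY y' y) /
           (PiBar (lam ` {1..n}) Y f (l, y) * phiY y y') > b"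
  shows "irreducible_on (lam ` {1..n} \<times> Y)
           (PMH (lam ` {1..n} \<times> Y) (phiBar (phiLam lam n \<alpha>') phiY \<alpha> \<beta>) (PiBar (lam ` {1..n}) Y f))
       \<and> aperiodic_on (lam ` {1..n} \<times> Y)
           (PMH (lam ` {1..n} \<times> Y) (phiBar (phiLam lam n \<alpha>') phiY \<alpha> \<beta>) (PiBar (lam ` {1..n}) Y f))"
proof -
  let ?Lam = "lam ` {1..n}" and ?S = "lam ` {1..n} \<times> Y"
  let ?phi = "phiBar (phiLam lam n \<alpha>') phiY \<alpha> \<beta>" and ?P = "PiBar (lam ` {1..n}) Y f"
  let ?K = "PMH ?S ?phi ?P"
  have inj: "inj_on lam {1..n}" using assms(4) by (rule strict_mono_on_imp_inj_on)
  have fin: "finite ?Lam" "finite ?S" using assms(1) by auto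
  have ranges: "0 \<le> \<alpha>'" "\<alpha>' \<le> 1" "0 \<le> \<alpha>" "0 \<le> \<beta>" using assms(8-12) by auto
  have P_pos: "\<forall>x\<in>?S. ?P x > 0"
    using assms(5) by (intro ballI PiBar_pos[OF fin(1) assms(1)]) auto
  have phi_nonneg: "\<forall>x\<in>?S. \<forall>z\<in>?S. ?phi x z \<ge> 0"
    by (rule phiBar_nonneg) (use assms(6,14) ranges in \<open>auto simp: markov_kernel_on_def phiLam_nonneg\<close>)
  have offdiag: "(\<Sum>z\<in>?S - {x}. ?phi x z) < 1" if "x \<in> ?S" for x
    using phiBar_phiLam_offdiag_sum_le[OF assms(1) inj assms(3,6) ranges that] assms(14) by linarith
  have K_nonneg: "\<forall>x\<in>?S. \<forall>z\<in>?S. ?K x z \<ge> 0"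
    by (rule PMH_nonneg[OF phi_nonneg]) (use P_pos offdiag in \<open>auto intro: less_imp_le\<close>)
  have diag_pos: "\<forall>x\<in>?S. ?K x x > 0"
    using phi_nonneg offdiag by (blast intro: PMH_diag_pos)
  have phiY_sym: "phiY y' y > 0" if "y \<in> Y" "y' \<in> Y" "phiY y y' > 0" for y y'
  proof (rule reverse_pos_if_ratio_gt[where P = "\<lambda>y. ?P (lam 1, y)"])
    have "lam 1 \<in> ?Lam" using assms(3) by auto
    then show "(?P (lam 1, y') * phiY y' y) / (?P (lam 1, y) * phiY y y') > b"
      "?P (lam 1, y) > 0" "?P (lam 1, y') > 0"
      using assms(16) P_pos that by auto
  qed (use assms(15) that in auto)
  have "irreducible_on ?S ?K"
    by (rule irreducible_on_PMH_phiBar[OF fin(1) assms(1) refl _ assms(6,7) phiY_sym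
          assms(10,12) P_pos K_nonneg])
      (use phiLam_ladder_step[OF inj assms(3,8,9)] in blast)
  then show ?thesis using aperiodic_on_if_diag_pos[where K = ?K, OF fin(2) diag_pos] by blast
qed

end
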